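(* Let $K$ be a field, $q\in K[x_1]\setminus K$, and let $f,g\in R_q[\tilde{\bm{x}}]\setminus R_q$ be such that $\operatorname{lm}(f)$ and $\operatorname{lm}(g)$ are relatively prime. Let $l_f:=\iota_q(\operatorname{lc}(f))$, $l_g:=\iota_q(\operatorname{lc}(g))$, $d:=\gcd(l_f,l_g)$, $f_1:=f-\operatorname{lt}(f)$, $g_1:=g-\operatorname{lt}(g)$. Then $$\sigma_q(d)\cdot S(f,g)=f_1\cdot\operatorname{lt}(g)-g_1\cdot\operatorname{lt}(f)=f_1g-g_1f.$$
   Context: $R_q:=\{r\in K[x_1]:\deg r<\deg q\}$ with operations modulo $q$ ($R_q\cong K[x_1]/(q)$); $R_q^\times$ its units. $\sigma_q:K[x_1]\to R_q$ is reduction modulo $q$ and $\iota_q:R_q\hookrightarrow K[x_1]$ the inclusion, both extended coefficientwise to polynomials in $\tilde{\bm{x}}=(x_2,\dots,x_n)$. A monomial ordering on monomials in $\tilde{\bm{x}}$ is fixed; for nonzero $f\in R_q[\tilde{\bm{x}}]$, $\operatorname{lm}(f)$, $\operatorname{lc}(f)$, $\operatorname{lt}(f)=\operatorname{lc}(f)\operatorname{lm}(f)$ are the leading monomial, coefficient and term. Gcds in $K[x_1]$ are monic and $\operatorname{lcm}(a,b)=ab/\gcd(a,b)$. For $f\in R_q[\tilde{\bm{x}}]\setminus R_q$ and $g\in R_q[\tilde{\bm{x}}]\setminus(R_q^\times\cup\{0\})$, with $m_f:=\sigma_q(\operatorname{lcm}(l_f,l_g)/l_f)$, $m_g:=\sigma_q(\operatorname{lcm}(l_f,l_g)/l_g)$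 and $\tilde{\bm{x}}^\gamma:=\operatorname{lcm}(\operatorname{lm}f,\operatorname{lm}g)$, the $S$-polynomial is $S(f,g):=\frac{m_f\tilde{\bm{x}}^\gamma}{\operatorname{lm}(f)}f-\frac{m_g\tilde{\bm{x}}^\gamma}{\operatorname{lm}(g)}g$. *)

theory Defs
  imports "HOL-Computational_Algebra.Polynomial_Factorial" "HOL-Library.Poly_Mapping"
begin

text \<open>Monomials in the variables x_2..x_n are exponent vectors of type 'v =>0 nat
  (the variable type 'v is finite). Polynomials in R_q[x~] are represented as
  finitely supported maps from monomials to K[x_1] whose coefficients all have
  degree < deg q (i.e. lie in R_q); ring operations are those of K[x_1][x~]
  followed by coefficientwise reduction modulo q.\<close>

definition monomial_order :: "(('v \<Rightarrow>\<^sub>0 nat) \<Rightarrow> ('v \<Rightarrow>\<^sub>0 nat) \<Rightarrow> bool) \<Rightarrow> bool" where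
  "monomial_order ord \<longleftrightarrow>
     (\<forall>a. ord a a) \<and>
     (\<forall>a b. ord a b \<and> ord b a \<longrightarrow> a = b) \<and>
     (\<forall>a b c. ord a b \<and> ord b c \<longrightarrow> ord a c) \<and>
     (\<forall>a b. ord a b \<or> ord b a) \<and>
     (\<forall>a. ord 0 a) \<and>
     (\<forall>a b c. ord a b \<longrightarrow> ord (a + c) (b + c))"

definition sigma_q :: "'a::field_gcd poly \<Rightarrow> ('m \<Rightarrow>\<^sub>0 'a poly) \<Rightarrow> ('m \<Rightarrow>\<^sub>0 'a poly)" where
  "sigma_q q f = Poly_Mapping.map (\<lambda>c. c mod q) f"

definition in_Rq_poly :: "'a::field_gcd poly \<Rightarrow> ('m \<Rightarrow>\<^sub>0 'a poly) \<Rightarrow> bool" where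
  "in_Rq_poly q f \<longleftrightarrow> (\<forall>m. degree (Poly_Mapping.lookup f m) < degree q)"

definition is_const :: "(('v \<Rightarrow>\<^sub>0 nat) \<Rightarrow>\<^sub>0 'a::zero) \<Rightarrow> bool" where
  "is_const f \<longleftrightarrow> Poly_Mapping.keys f \<subseteq> {0}"

definition const_q :: "'a::zero \<Rightarrow> (('v \<Rightarrow>\<^sub>0 nat) \<Rightarrow>\<^sub>0 'a)" where
  "const_q c = Poly_Mapping.single 0 c"

definition mult_q :: "'a::field_gcd poly \<Rightarrow> (('v \<Rightarrow>\<^sub>0 nat) \<Rightarrow>\<^sub>0 'a poly)
    \<Rightarrow> (('v \<Rightarrow>\<^sub>0 nat) \<Rightarrow>\<^sub>0 'a poly) \<Rightarrow> (('v \<Rightarrow>\<^sub>0 nat) \<Rightarrow>\<^sub>0 'a poly)" where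
  "mult_q q f g = sigma_q q (f * g)"

definition lm :: "(('v \<Rightarrow>\<^sub>0 nat) \<Rightarrow> ('v \<Rightarrow>\<^sub>0 nat) \<Rightarrow> bool) \<Rightarrow> (('v \<Rightarrow>\<^sub>0 nat) \<Rightarrow>\<^sub>0 'a::zero)
    \<Rightarrow> ('v \<Rightarrow>\<^sub>0 nat)" where
  "lm ord f = (THE m. m \<in> Poly_Mapping.keys f \<and> (\<forall>m'\<in>Poly_Mapping.keys f. ord m' m))"

definition lc :: "(('v \<Rightarrow>\<^sub>0 nat) \<Rightarrow> ('v \<Rightarrow>\<^sub>0 nat) \<Rightarrow> bool) \<Rightarrow> (('v \<Rightarrow>\<^sub>0 nat) \<Rightarrow>\<^sub>0 'a::zero) \<Rightarrow> 'a" where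
  "lc ord f = Poly_Mapping.lookup f (lm ord f)"

definition lt :: "(('v \<Rightarrow>\<^sub>0 nat) \<Rightarrow> ('v \<Rightarrow>\<^sub>0 nat) \<Rightarrow> bool) \<Rightarrow> (('v \<Rightarrow>\<^sub>0 nat) \<Rightarrow>\<^sub>0 'a::zero)
    \<Rightarrow> (('v \<Rightarrow>\<^sub>0 nat) \<Rightarrow>\<^sub>0 'a)" where
  "lt ord f = Poly_Mapping.single (lm ord f) (lc ord f)"

text \<open>lcm of monomials (pointwise max) and relative primality (gcd = 1)\<close>
definition mon_lcm :: "('v \<Rightarrow>\<^sub>0 nat) \<Rightarrow> ('v \<Rightarrow>\<^sub>0 nat) \<Rightarrow> ('v \<Rightarrow>\<^sub>0 nat)" where
  "mon_lcm a b = a + (b - a)"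

definition mon_coprime :: "('v \<Rightarrow>\<^sub>0 nat) \<Rightarrow> ('v \<Rightarrow>\<^sub>0 nat) \<Rightarrow> bool" where
  "mon_coprime a b \<longleftrightarrow> (\<forall>v. min (Poly_Mapping.lookup a v) (Poly_Mapping.lookup b v) = 0)"

text \<open>lcm in K[x_1] as in the paper: lcm(a,b) = ab / gcd(a,b), gcd monic (library gcd)\<close>
definition lcm_p :: "'a::field_gcd poly \<Rightarrow> 'a poly \<Rightarrow> 'a poly" where
  "lcm_p a b = (a * b) div gcd a b"

definition spoly_q :: "'a::field_gcd poly \<Rightarrow> (('v \<Rightarrow>\<^sub>0 nat) \<Rightarrow> ('v \<Rightarrow>\<^sub>0 nat) \<Rightarrow> bool)
    \<Rightarrow> (('v \<Rightarrow>\<^sub>0 nat) \<Rightarrow>\<^sub>0 'a poly) \<Rightarrow> (('v \<Rightarrow>\<^sub>0 nat) \<Rightarrow>\<^sub>0 'a poly) \<Rightarrow> (('v \<Rightarrow>\<^sub>0 nat) \<Rightarrow>\<^sub>0 'a poly)" where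
  "spoly_q q ord f g =
    (let lf = lc ord f; lg = lc ord g;
         mf = (lcm_p lf lg div lf) mod q; mg = (lcm_p lf lg div lg) mod q;
         \<gamma> = mon_lcm (lm ord f) (lm ord g)
     in mult_q q (Poly_Mapping.single (\<gamma> - lm ord f) mf) f
        - mult_q q (Poly_Mapping.single (\<gamma> - lm ord g) mg) g)"

end

theory Submission
  imports Defs
begin

text \<open>When the leading monomials are coprime, the monomial cofactors in \<open>S(f,g)\<close> are
  \<open>lm(g)\<close> and \<open>lm(f)\<close> and the coefficient cofactors are \<open>l\<^sub>g/d\<close> and \<open>l\<^sub>f/d\<close>, so
  \<open>d \<cdot> S(f,g)\<close> is the reduction of \<open>lt(g) f - lt(f) g\<close>; both right-hand sides are
  rearrangements of this same expression. Reduction modulo \<open>q\<close> is a ring morphism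
  \<open>K[x\<^sub>1][x~] \<rightarrow> R\<^sub>q[x~]\<close>, so all intermediate reductions may be postponed to the end.\<close>

lemma lookup_map:
  assumes "h 0 = 0"
  shows "Poly_Mapping.lookup (Poly_Mapping.map h p) k = h (Poly_Mapping.lookup p k)"
  using assms by (simp add: Poly_Mapping.map.rep_eq when_def)

lemma lookup_sigma_q: "Poly_Mapping.lookup (sigma_q q p) k = Poly_Mapping.lookup p k mod q"
  unfolding sigma_q_def by (simp add: lookup_map)

lemma sigma_q_diff: "sigma_q q (p - r) = sigma_q q p - sigma_q q r"
  by (rule poly_mapping_eqI) (simp add: lookup_sigma_q lookup_minus poly_mod_diff_left)

lemma sigma_q_single: "sigma_q q (Poly_Mapping.single m c) = Poly_Mapping.single m (c mod q)"
  unfolding sigma_q_def by simp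

lemma sigma_q_single_q_mult: "sigma_q q (Poly_Mapping.single 0 q * p) = 0"
  by (rule poly_mapping_eqI)
    (simp add: lookup_sigma_q lookup_map flip: mult_map_scale_conv_mult)

lemma diff_sigma_q: "p - sigma_q q p = Poly_Mapping.single 0 q * Poly_Mapping.map (\<lambda>c. c div q) p"
  by (rule poly_mapping_eqI)
    (simp add: lookup_minus lookup_sigma_q lookup_map minus_mod_eq_mult_div
      flip: mult_map_scale_conv_mult)

lemma sigma_q_mult_sigma_q_right:
  fixes p r :: "'m::comm_monoid_add \<Rightarrow>\<^sub>0 'a::field_gcd poly"
  shows "sigma_q q (p * sigma_q q r) = sigma_q q (p * r)"
proof -
  have "p * r - p * sigma_q q r = Poly_Mapping.single 0 q * (p * Poly_Mapping.map (\<lambda>c. c div q) r)"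
    by (simp add: mult.left_commute flip: right_diff_distrib diff_sigma_q)
  then have "sigma_q q (p * r) - sigma_q q (p * sigma_q q r) = 0"
    by (simp add: sigma_q_single_q_mult flip: sigma_q_diff)
  then show ?thesis by simp
qed

lemma sigma_q_mult_sigma_q_left:
  fixes p r :: "'m::comm_monoid_add \<Rightarrow>\<^sub>0 'a::field_gcd poly"
  shows "sigma_q q (sigma_q q p * r) = sigma_q q (p * r)"
  using sigma_q_mult_sigma_q_right[of q r p] by (simp add: mult.commute)

lemma finite_total_trans_has_greatest:
  assumes "finite S" "S \<noteq> {}"
    and total: "\<And>a b. R a b \<or> R b a"
    and trans: "\<And>a b c. R a b \<Longrightarrow> R b c \<Longrightarrow> R a c"
  shows "\<exists>m\<in>S. \<forall>x\<in>S. R x m"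
  using assms(1,2)
proof (induction rule: finite_ne_induct)
  case (singleton x)
  then show ?case using total by blast
next
  case (insert x F)
  then obtain m where "m \<in> F" "\<forall>y\<in>F. R y m" by blast
  then show ?case using total[of x m] total[of x x] trans by blast
qed

lemma lm_in_keys:
  assumes "monomial_order ord" "f \<noteq> 0"
  shows "lm ord f \<in> Poly_Mapping.keys f"
proof -
  have total: "\<And>a b. ord a b \<or> ord b a"
    and antisym: "\<And>a b. ord a b \<Longrightarrow> ord b a \<Longrightarrow> a = b"
    and trans: "\<And>a b c. ord a b \<Longrightarrow> ord b c \<Longrightarrow> ord a c"
    using assms(1) unfolding monomial_order_def by blast+
  obtain m where m: "m \<in> Poly_Mapping.keys f" "\<forall>m'\<in>Poly_Mapping.keys f. ord m' m"
    using finite_total_trans_has_greatest[of "Poly_Mapping.keys f" ord] total trans assms(2) by auto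
  have "lm ord f = m"
    unfolding lm_def by (rule the_equality) (use m antisym in blast)+
  with m show ?thesis by simp
qed

lemma lc_neq_zero:
  assumes "monomial_order ord" "f \<noteq> 0"
  shows "lc ord f \<noteq> 0"
  using lm_in_keys[OF assms] by (simp add: lc_def in_keys_iff)

lemma mon_coprime_lcm_minus:
  assumes "mon_coprime a b"
  shows "mon_lcm a b - a = b" "mon_lcm a b - b = a"
proof -
  have "b - a = b"
  proof (rule poly_mapping_eqI)
    fix v
    have "min (Poly_Mapping.lookup a v) (Poly_Mapping.lookup b v) = 0"
      using assms unfolding mon_coprime_def by blast
    then show "Poly_Mapping.lookup (b - a) v = Poly_Mapping.lookup b v"
      by (auto simp: lookup_minus min_def split: if_splits)
  qed
  then show "mon_lcm a b - a = b" "mon_lcm a b - b = a"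
    unfolding mon_lcm_def by simp_all
qed

lemma lcm_p_div_left:
  assumes "a \<noteq> 0"
  shows "lcm_p a b div a = b div gcd a b"
  using assms by (simp add: lcm_p_def flip: div_mult_swap)

lemma lcm_p_commute: "lcm_p a b = lcm_p b a"
  by (simp add: lcm_p_def mult.commute gcd.commute)

lemma lcm_p_div_right:
  assumes "b \<noteq> 0"
  shows "lcm_p a b div b = a div gcd a b"
  using lcm_p_div_left[OF assms, of a] by (simp add: lcm_p_commute gcd.commute)

lemma spoly_q_mon_coprime:
  assumes "monomial_order ord" "f \<noteq> 0" "g \<noteq> 0" "mon_coprime (lm ord f) (lm ord g)"
  defines "d \<equiv> gcd (lc ord f) (lc ord g)"
  shows "spoly_q q ord f g = sigma_q q (Poly_Mapping.single (lm ord g) (lc ord g div d) * f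
           - Poly_Mapping.single (lm ord f) (lc ord f div d) * g)"
  unfolding spoly_q_def Let_def mult_q_def d_def
    lcm_p_div_left[OF lc_neq_zero[OF assms(1,2)]] lcm_p_div_right[OF lc_neq_zero[OF assms(1,3)]]
    mon_coprime_lcm_minus[OF assms(4)]
  by (simp add: sigma_q_diff sigma_q_mult_sigma_q_left flip: sigma_q_single)

lemma single_zero_mult_single_div:
  fixes c a :: "'b::algebraic_semidom"
  assumes "c dvd a"
  shows "Poly_Mapping.single 0 c * Poly_Mapping.single m (a div c) = Poly_Mapping.single m a"
  using assms by (simp add: mult_single)

lemma gcd_lc_mult_spoly_q_mon_coprime:
  assumes "monomial_order ord" "f \<noteq> 0" "g \<noteq> 0" "mon_coprime (lm ord f) (lm ord g)"
  defines "d \<equiv> gcd (lc ord f) (lc ord g)"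
  shows "mult_q q (const_q (d mod q)) (spoly_q q ord f g) = sigma_q q (lt ord g * f - lt ord f * g)"
proof -
  have "mult_q q (const_q (d mod q)) (spoly_q q ord f g)
      = sigma_q q (Poly_Mapping.single 0 d * (Poly_Mapping.single (lm ord g) (lc ord g div d) * f
          - Poly_Mapping.single (lm ord f) (lc ord f div d) * g))"
    unfolding mult_q_def const_q_def spoly_q_mon_coprime[OF assms(1-4)] d_def
    by (simp add: sigma_q_mult_sigma_q_left sigma_q_mult_sigma_q_right flip: sigma_q_single)
  also have "\<dots> = sigma_q q (lt ord g * f - lt ord f * g)"
    by (simp add: lt_def d_def right_diff_distrib single_zero_mult_single_div flip: mult.assoc)
  finally show ?thesis .
qed

theorem lemma5p5:
  fixes q :: "'a::field_gcd poly"
    and ord :: "('v::finite \<Rightarrow>\<^sub>0 nat) \<Rightarrow> ('v \<Rightarrow>\<^sub>0 nat) \<Rightarrow> bool"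
    and f g :: "('v \<Rightarrow>\<^sub>0 nat) \<Rightarrow>\<^sub>0 'a poly"
  assumes "monomial_order ord"
    and "degree q > 0"
    and "in_Rq_poly q f" and "\<not> is_const f"
    and "in_Rq_poly q g" and "\<not> is_const g"
    and "mon_coprime (lm ord f) (lm ord g)"
  defines "d \<equiv> gcd (lc ord f) (lc ord g)"
    and "f1 \<equiv> f - lt ord f"
    and "g1 \<equiv> g - lt ord g"
  shows "mult_q q (const_q (d mod q)) (spoly_q q ord f g)
           = mult_q q f1 (lt ord g) - mult_q q g1 (lt ord f)
       \<and> mult_q q f1 (lt ord g) - mult_q q g1 (lt ord f)
           = mult_q q f1 g - mult_q q g1 f"
proof -
  have "f \<noteq> 0" "g \<noteq> 0"
    using \<open>\<not> is_const f\<close> \<open>\<not> is_const g\<close> by (auto simp: is_const_def)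
  then have "mult_q q (const_q (d mod q)) (spoly_q q ord f g) = sigma_q q (lt ord g * f - lt ord f * g)"
    unfolding d_def using gcd_lc_mult_spoly_q_mon_coprime assms(1,7) by blast
  moreover have "mult_q q f1 (lt ord g) - mult_q q g1 (lt ord f) = sigma_q q (lt ord g * f - lt ord f * g)"
    unfolding mult_q_def f1_def g1_def by (simp add: algebra_simps flip: sigma_q_diff)
  moreover have "mult_q q f1 g - mult_q q g1 f = sigma_q q (lt ord g * f - lt ord f * g)"
    unfolding mult_q_def f1_def g1_def by (simp add: algebra_simps flip: sigma_q_diff)
  ultimately show ?thesis by simp
qed

end
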